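(* Let $d>1$ be an integer and write $d=2^n3^mb$ with $\gcd(b,6)=1$. Let $a$ be an integer with $0\le a<d$, and let $f$ be the multiplicative order of $3/2$ modulo $b$. Then for every positive integer $x$ not divisible by $3$ there exists an admissible vector $s\in\mathcal{E}(x)$ with $v_s(x)\equiv a\pmod d$ and $l(s)\le 2(b-1)f+n+1$.
   Context: Let $T_0^{-1}(x)=2x$ and $T_1^{-1}(x)=(2x-1)/3$, viewed as maps $\mathbb{Q}\to\mathbb{Q}$. For $s=(s_0,s_1,\dots,s_k)$ with $k\ge 0$ and all $s_i$ nonnegative integers, the length of $s$ is $l(s)=k$ and $v_s=T_0^{-s_0}\circ T_1^{-1}\circ T_0^{-s_1}\circ T_1^{-1}\circ\cdots\circ T_1^{-1}\circ T_0^{-s_k}$ (with $k$ occurrences of $T_1^{-1}$). The vector $s$ is admissible for a positive integer $x$ if $v_s(x)$ is a positive integer; $\mathcal{E}(x)$ denotes the set of vectors admissible for $x$. *)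

theory Defs
  imports "HOL-Number_Theory.Number_Theory"
begin

definition T0inv :: "rat \<Rightarrow> rat" where
  "T0inv x = 2 * x"

definition T1inv :: "rat \<Rightarrow> rat" where
  "T1inv x = (2 * x - 1) / 3"

text \<open>A vector s = (s_0,...,s_k) is a nonempty list; v_s = T0^{-s_0} o T1^{-1} o T0^{-s_1} o ... o T0^{-s_k}.\<close>
fun vs :: "nat list \<Rightarrow> rat \<Rightarrow> rat" where
  "vs [] = id"
| "vs [s0] = T0inv ^^ s0"
| "vs (s0 # rest) = (T0inv ^^ s0) \<circ> T1inv \<circ> vs rest"

text \<open>length l(s) = k for s = (s_0,...,s_k)\<close>
definition len :: "nat list \<Rightarrow> nat" where
  "len s = length s - 1"

definition admissible :: "nat list \<Rightarrow> nat \<Rightarrow> bool" where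
  "admissible s x \<longleftrightarrow> s \<noteq> [] \<and> (\<exists>k::nat. k > 0 \<and> vs s (of_nat x) = of_nat k)"

definition E :: "nat \<Rightarrow> nat list set" where
  "E x = {s. admissible s x}"

definition ord32 :: "nat \<Rightarrow> nat" where
  "ord32 b = ord b (3 * modular_inverse b 2)"

end

theory Submission
  imports Defs
begin

(* Write twos s for the total exponent of 2 in v_s and offset s for its constant
   term, so that 3^k * v_s(x) = 2^(twos s) * x - offset s with k = l(s) (lemma vs_affine).
   It therefore suffices to find s whose numerator numer s x = 2^(twos s) * x - offset s is
   positive and congruent to 3^k * a modulo 3^k * d = 2^n * b * 3^(k+m)
   (admissible_of_congruence).  Vectors are assembled by gluing
   (glue s t, the vector of v_s o v_t), whose offsets compose affinely (offset_glue), and s is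
   glued from three pieces, each responsible for one prime-power part of the modulus:
   - a prefix P of length <= n settling the condition modulo 2^n (two_adic_prefix);
   - b - 1 blocks of length f = ord32 b settling the condition modulo b (block_word_for_residue);
   - a tail of length f settling the condition modulo 3^(k+m), using that 2 is a primitive root
     modulo powers of 3, and making N(s) positive (tail_exists).
   The blocks only need 3^f = 2^f modulo b, which is what f = ord32 b provides (ord32_props).
   The three congruences combine by the Chinese remainder theorem (numerator_construction);
   the length is l(P) + f * (b - 1) + f <= n + f * b <= 2 * (b - 1) * f + n + 1. *)

(* The affine map v_s has leading coefficient 2^(twos s) / 3^(l(s)): every entry of s counts
   T0^{-1}-steps, and each of the l(s) steps T1^{-1} contributes one more factor 2. *)
definition twos :: "nat list \<Rightarrow> nat" where
  "twos s = sum_list s + len s"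

(* offset s is the constant term of v_s after clearing the denominator 3^(l(s)); see vs_affine. *)
fun offset :: "nat list \<Rightarrow> nat" where
  "offset [] = 0"
| "offset [_] = 0"
| "offset (e # e' # t) = 2 ^ e * (2 * offset (e' # t) + 3 ^ length t)"

lemma T0inv_pow: "(T0inv ^^ e) y = 2 ^ e * y"
  by (induction e arbitrary: y) (simp_all add: T0inv_def)

lemma offset_Cons: "t \<noteq> [] \<Longrightarrow> offset (e # t) = 2 ^ e * (2 * offset t + 3 ^ len t)"
  by (cases t) (auto simp: len_def)

lemma len_Cons: "t \<noteq> [] \<Longrightarrow> len (e # t) = Suc (len t)"
  by (cases t) (auto simp: len_def)

lemma len_singleton [simp]: "len [e] = 0"
  by (simp add: len_def)

lemma twos_singleton [simp]: "twos [e] = e"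
  by (simp add: twos_def)

lemma twos_Cons: "t \<noteq> [] \<Longrightarrow> twos (e # t) = e + 1 + twos t"
  by (simp add: twos_def len_Cons)

lemma vs_affine:
  "s \<noteq> [] \<Longrightarrow> 3 ^ len s * vs s y = 2 ^ twos s * y - of_nat (offset s)"
proof (induction s arbitrary: y rule: vs.induct)
  case 1 then show ?case by simp
next
  case (2 e) then show ?case by (simp add: T0inv_pow twos_def len_def)
next
  case (3 e e' t)
  let ?r = "e' # t"
  have IH: "3 ^ len ?r * vs ?r y = 2 ^ twos ?r * y - of_nat (offset ?r)"
    using 3 by simp
  have "3 ^ len (e # ?r) * vs (e # ?r) y = 3 ^ len ?r * 3 * (2 ^ e * ((2 * vs ?r y - 1) / 3))"
    by (simp add: T0inv_pow T1inv_def len_def)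
  also have "\<dots> = 2 ^ e * (2 * (3 ^ len ?r * vs ?r y) - 3 ^ len ?r)"
    by (simp add: field_simps)
  also have "\<dots> = 2 ^ twos (e # ?r) * y - of_nat (offset (e # ?r))"
    unfolding IH by (simp add: twos_Cons offset_Cons len_def algebra_simps power_add)
  finally show ?case .
qed

(* The numerator of v_s(x) over the denominator 3^(l(s)). *)
definition numer :: "nat list \<Rightarrow> nat \<Rightarrow> int" where
  "numer s x = 2 ^ twos s * int x - int (offset s)"

lemma admissible_of_congruence:
  fixes x a d :: nat and s :: "nat list"
  assumes s: "s \<noteq> []" and pos: "numer s x > 0"
    and cong: "[numer s x = 3 ^ len s * int a] (mod 3 ^ len s * int d)"
  shows "s \<in> E x \<and> (\<exists>z::nat. vs s (of_nat x) = of_nat z \<and> [z = a] (mod d))"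
proof -
  have "[numer s x = 3 ^ len s * int a] (mod 3 ^ len s)"
    using cong by (rule cong_modulus_mult)
  then have "3 ^ len s dvd numer s x"
    by (simp add: cong_dvd_iff)
  then obtain z0 where z0: "numer s x = 3 ^ len s * z0" by blast
  then have "z0 > 0" using pos by (simp add: zero_less_mult_iff)
  define z where "z = nat z0"
  have z: "int z = z0" using \<open>z0 > 0\<close> by (simp add: z_def)
  have "3 ^ len s * vs s (of_nat x) = 2 ^ twos s * of_nat x - of_nat (offset s)"
    by (rule vs_affine[OF s])
  also have "\<dots> = of_int (numer s x)" by (simp add: numer_def)
  also have "\<dots> = 3 ^ len s * of_nat z" by (simp add: z0 z[symmetric])
  finally have vs: "vs s (of_nat x) = of_nat z" by simp
  have "3 ^ len s * int d dvd 3 ^ len s * (int z - int a)"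
    using cong by (simp add: cong_iff_dvd_diff z0 z right_diff_distrib)
  then have "[z = a] (mod d)"
    by (simp add: cong_iff_dvd_diff cong_int_iff[symmetric])
  moreover have "s \<in> E x"
    using s vs \<open>z0 > 0\<close> z by (auto simp: E_def admissible_def)
  ultimately show ?thesis using vs by blast
qed

(* Gluing two vectors adds the last entry of s to the first entry of t; since powers of T0^{-1}
   merge, v_(glue s t) = v_s o v_t.  All constructions below glue simpler pieces. *)
definition glue :: "nat list \<Rightarrow> nat list \<Rightarrow> nat list" where
  "glue s t = butlast s @ (last s + hd t) # tl t"

lemma glue_nonempty: "glue s t \<noteq> []"
  by (simp add: glue_def)

lemma glue_Cons: "s \<noteq> [] \<Longrightarrow> glue (e # s) t = e # glue s t"
  by (simp add: glue_def)

lemma len_glue: "s \<noteq> [] \<Longrightarrow> t \<noteq> [] \<Longrightarrow> len (glue s t) = len s + len t"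
  by (cases t) (auto simp: glue_def len_def)

lemma twos_glue: "s \<noteq> [] \<Longrightarrow> t \<noteq> [] \<Longrightarrow> twos (glue s t) = twos s + twos t"
proof -
  assume s: "s \<noteq> []" and t: "t \<noteq> []"
  have "sum_list s = sum_list (butlast s) + last s"
    using s by (metis append_butlast_last_id sum_list_append sum_list_simps add_0 add.commute)
  moreover have "sum_list t = hd t + sum_list (tl t)"
    using t by (cases t) auto
  ultimately have "sum_list (glue s t) = sum_list s + sum_list t"
    by (simp add: glue_def)
  then show ?thesis using s t by (simp add: twos_def len_glue)
qed

lemma offset_glue:
  "s \<noteq> [] \<Longrightarrow> t \<noteq> [] \<Longrightarrow> offset (glue s t) = 2 ^ twos s * offset t + 3 ^ len t * offset s"
proof (induction s)
  case Nil then show ?case by simp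
next
  case (Cons e s)
  obtain h r where t: "t = h # r" using Cons.prems by (cases t) auto
  show ?case
  proof (cases "s = []")
    case True
    then show ?thesis using t
      by (cases "r = []") (simp_all add: glue_def twos_def len_def offset_Cons power_add)
  next
    case False
    have "offset (glue (e # s) t) = 2 ^ e * (2 * offset (glue s t) + 3 ^ (len s + len t))"
      using False Cons.prems by (simp add: glue_Cons offset_Cons glue_nonempty len_glue)
    also have "\<dots> = 2 ^ twos (e # s) * offset t + 3 ^ len t * offset (e # s)"
      using Cons False by (simp add: twos_Cons offset_Cons algebra_simps power_add)
    finally show ?thesis .
  qed
qed

lemma offset_zeros: "int (offset (replicate j 0 @ [e])) = 3 ^ j - 2 ^ j"
proof (induction j)
  case 0 then show ?case by simp
next
  case (Suc j)
  have "offset (replicate (Suc j) 0 @ [e]) = 2 * offset (replicate j 0 @ [e]) + 3 ^ j"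
    by (simp add: offset_Cons len_def)
  then show ?case using Suc by simp
qed

lemma twos_zeros: "twos (replicate j 0 @ [e]) = j + e"
  by (simp add: twos_def len_def)

lemma len_zeros: "len (replicate j 0 @ [e]) = j"
  by (simp add: len_def)

lemma coprime6_factors:
  fixes b :: nat
  assumes "coprime b 6"
  shows "coprime b 2" "coprime b 3" "coprime (int b) 2" "coprime (int b) 3"
proof -
  have "coprime b (2 * 3)" using assms by simp
  then show "coprime b 2" "coprime b 3" by (simp_all only: coprime_mult_right_iff)
  then show "coprime (int b) 2" "coprime (int b) 3"
    by (metis coprime_int_iff of_nat_numeral)+
qed

lemma two_power_totient:
  fixes N :: nat
  assumes "coprime N 2"
  shows "[2 ^ (totient N * j) = 1] (mod int N)"
proof -
  have "[2 ^ totient N = 1] (mod N)"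
    using assms by (intro euler_theorem) (simp add: coprime_commute)
  then have "[(2 ^ totient N) ^ j = 1 ^ j] (mod N)"
    by (rule cong_pow)
  then show ?thesis
    by (metis cong_int_iff of_nat_1 of_nat_numeral of_nat_power power_mult power_one)
qed

lemma pad_to_multiple:
  fixes q t y :: nat
  assumes "q > 0"
  shows "\<exists>e\<ge>y. q dvd t + e"
proof (intro exI conjI)
  have le: "t + y \<le> q * (t + y)" using assms by simp
  then show "y \<le> q * (t + y) - t" by linarith
  have "t + (q * (t + y) - t) = q * (t + y)" using le by linarith
  then show "q dvd t + (q * (t + y) - t)" by simp
qed

lemma linear_residue:
  fixes c r :: int and b :: nat
  assumes cop: "coprime c (int b)" and b: "b > 0"
  shows "\<exists>t<b. [c * int t = r] (mod int b)"
proof -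
  obtain i where i: "[c * i = 1] (mod int b)"
    using cong_solve_coprime_int[OF cop] by blast
  define t where "t = nat ((r * i) mod int b)"
  have t: "int t = (r * i) mod int b"
    using b by (simp add: t_def)
  then have "t < b"
    using b by (metis of_nat_less_iff pos_mod_bound of_nat_0_less_iff)
  have "[c * int t = c * (r * i)] (mod int b)"
    unfolding t by (intro cong_scalar_left) (simp add: cong_def)
  also have "c * (r * i) = r * (c * i)"
    by (simp add: algebra_simps)
  also have "[\<dots> = r * 1] (mod int b)"
    by (rule cong_scalar_left[OF i])
  finally show ?thesis using \<open>t < b\<close> by auto
qed

lemma not_dvd3_add_pow3:
  fixes y z :: int
  assumes "\<not> 3 dvd y" and "k \<ge> 1"
  shows "\<not> 3 dvd y + 3 ^ k * z"
proof -
  have "3 dvd (3::int) ^ k * z" using assms(2) by (simp add: Suc_le_eq)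
  then show ?thesis using assms(1) by (simp add: dvd_add_left_iff)
qed

lemma not_dvd3_pow3_minus_pow2:
  assumes "f \<ge> 1"
  shows "\<not> 3 dvd (3::int) ^ f - 2 ^ f"
proof -
  have "\<not> (3::int) dvd 2 ^ f"
  proof
    assume "(3::int) dvd 2 ^ f"
    then have "(3::int) dvd 2" by (rule prime_dvd_power[rotated]) simp
    then show False by simp
  qed
  then have "\<not> 3 dvd - (2 ^ f) + 3 ^ f * (1::int)"
    by (intro not_dvd3_add_pow3 assms) simp
  then show ?thesis by simp
qed

lemma cong_2_b_3:
  fixes X Y :: int and b :: nat
  assumes "coprime b 6"
    and "[X = Y] (mod 2 ^ n)" "[X = Y] (mod int b)" "[X = Y] (mod 3 ^ K)"
  shows "[X = Y] (mod 2 ^ n * int b * 3 ^ K)"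
proof -
  have "coprime (2 ^ n) (int b)"
    using coprime6_factors(3)[OF assms(1)] by (simp add: coprime_commute)
  then have "[X = Y] (mod 2 ^ n * int b)"
    by (rule coprime_cong_mult[OF assms(2,3)])
  moreover have "coprime (2 ^ n * int b) (3 ^ K)"
    using coprime6_factors(4)[OF assms(1)] by simp
  ultimately show ?thesis
    by (rule coprime_cong_mult[OF _ assms(4)])
qed

(* 2 is a primitive root modulo every power of 3 (it is one modulo 3, and 2^2 is not 1 mod 9). *)
lemma two_primroot_pow3:
  assumes "K > 0"
  shows "residue_primroot (3 ^ K) 2"
proof -
  have "ord 3 (2::nat) dvd 2"
    by (simp add: ord_divides[symmetric] cong_def)
  moreover have "ord 3 (2::nat) \<noteq> 1"
    using ord_eq_Suc_0_iff[of 3 2] by (simp add: cong_def)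
  moreover have "ord 3 (2::nat) > 0"
    by simp
  ultimately have "ord 3 (2::nat) = 2"
    using dvd_imp_le[of "ord 3 (2::nat)" 2] by (auto simp: le_Suc_eq numeral_2_eq_2)
  then have "residue_primroot 3 2"
    by (simp add: residue_primroot_def totient_prime)
  moreover have "[(2::nat) ^ (3 - 1) \<noteq> 1] (mod 3\<^sup>2)"
    by (simp add: cong_def)
  ultimately show ?thesis
    using residue_primroot_prime_lift_iff[of 3 2] assms by simp
qed

lemma totative_mod_pow3:
  fixes v :: int
  assumes v: "\<not> 3 dvd v" and K: "K > 0"
  shows "nat (v mod 3 ^ K) \<in> totatives (3 ^ K)"
proof -
  define v' where "v' = nat (v mod 3 ^ K)"
  have v': "int v' = v mod 3 ^ K"
    by (simp add: v'_def)
  have "\<not> 3 dvd int v'"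
  proof
    assume "3 dvd int v'"
    moreover have "(3::int) dvd 3 ^ K" using K by simp
    ultimately have "3 dvd v mod 3 ^ K + 3 ^ K * (v div 3 ^ K)"
      using v' by (intro dvd_add dvd_mult2) simp_all
    then show False using v by (simp only: mod_mult_div_eq)
  qed
  then have "\<not> 3 dvd v'"
    by (metis int_dvd_int_iff of_nat_numeral)
  then have "coprime v' (3 ^ K)"
    using prime_imp_coprime[of "3::nat" v'] by (simp add: coprime_commute)
  moreover have "v' > 0"
    using \<open>\<not> 3 dvd v'\<close> by (rule contrapos_np) simp
  moreover have "int v' < 3 ^ K"
    unfolding v' by simp
  ultimately show ?thesis
    unfolding v'_def[symmetric] totatives_def by simp
qed

lemma powers_of_two_mod_pow3:
  fixes v :: int
  assumes v: "\<not> 3 dvd v"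
  shows "\<exists>i. [2 ^ i = v] (mod 3 ^ K)"
proof (cases "K = 0")
  case True
  then show ?thesis by simp
next
  case False
  define m :: nat where "m = 3 ^ K"
  have "m > 1"
    using False one_less_power[of "3::nat" K] by (simp add: m_def)
  moreover have "residue_primroot m 2"
    using two_primroot_pow3 False by (simp add: m_def)
  ultimately have "bij_betw (\<lambda>i. 2 ^ i mod m) {..<totient m} (totatives m)"
    by (rule residue_primroot_is_generator)
  then have "nat (v mod int m) \<in> (\<lambda>i. 2 ^ i mod m) ` {..<totient m}"
    using totative_mod_pow3[OF v] False by (simp add: bij_betw_def m_def)
  then obtain i where "nat (v mod int m) = 2 ^ i mod m"
    by blast
  then have "[2 ^ i = nat (v mod int m)] (mod m)"
    by (simp add: cong_def)
  then have "[2 ^ i = int (nat (v mod int m))] (mod int m)"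
    by (metis cong_int_iff of_nat_numeral of_nat_power)
  also have "[int (nat (v mod int m)) = v] (mod int m)"
    by (simp add: cong_def m_def)
  finally show ?thesis
    by (auto simp: m_def)
qed

lemma two_generates_mod_pow3:
  fixes u w :: int
  assumes u: "\<not> 3 dvd u" and w: "\<not> 3 dvd w"
  shows "\<exists>c\<ge>L. [w * 2 ^ c = u] (mod 3 ^ K)"
proof -
  obtain i j where i: "[2 ^ i = u] (mod 3 ^ K)" and j: "[2 ^ j = w] (mod 3 ^ K)"
    using powers_of_two_mod_pow3 u w by metis
  define \<phi> where "\<phi> = totient (3 ^ K)"
  have "\<phi> > 0" by (simp add: \<phi>_def)
  then have le: "j + L \<le> \<phi> * (j + L)" by simp
  define c where "c = i + \<phi> * (j + L) - j"
  have jc: "j + c = i + \<phi> * (j + L)" and "c \<ge> L"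
    using le unfolding c_def by linarith+
  have "coprime (3 ^ K :: nat) 2" by simp
  then have one: "[(2::int) ^ (\<phi> * (j + L)) = 1] (mod 3 ^ K)"
    using two_power_totient[of "3 ^ K" "j + L"] by (simp add: \<phi>_def)
  have "[w * 2 ^ c = 2 ^ j * 2 ^ c] (mod 3 ^ K)"
    by (rule cong_scalar_right[OF cong_sym[OF j]])
  also have "2 ^ j * 2 ^ c = (2::int) ^ i * 2 ^ (\<phi> * (j + L))"
    by (simp add: jc power_add[symmetric])
  also have "[\<dots> = u * 1] (mod 3 ^ K)"
    by (rule cong_mult[OF i one])
  finally show ?thesis
    using \<open>c \<ge> L\<close> by auto
qed

lemma ord_int_as_nat:
  fixes b :: nat and a :: int
  assumes "b > 0"
  shows "ord (int b) a = ord b (nat (a mod int b))"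
proof -
  define a' where "a' = nat (a mod int b)"
  have a': "int a' = a mod int b"
    using assms by (simp add: a'_def)
  have pow: "[a ^ k = 1] (mod int b) \<longleftrightarrow> [a' ^ k = 1] (mod b)" for k
  proof -
    have "[a' ^ k = 1] (mod b) \<longleftrightarrow> [(a mod int b) ^ k = 1] (mod int b)"
      by (metis a' cong_int_iff of_nat_1 of_nat_power)
    also have "\<dots> \<longleftrightarrow> [a ^ k = 1] (mod int b)"
      by (simp add: cong_def power_mod)
    finally show ?thesis by simp
  qed
  have "coprime (int b) a \<longleftrightarrow> coprime b a'"
    using assms by (metis a' coprime_int_iff coprime_mod_right_iff of_nat_0_less_iff
        less_numeral_extra(3))
  then show ?thesis
    by (simp add: ord_def pow a'_def)
qed

lemma ord32_props:
  fixes b :: nat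
  assumes b: "b > 0" "coprime b 6"
  shows "ord32 b \<ge> 1" "[3 ^ ord32 b = 2 ^ ord32 b] (mod int b)"
proof -
  define iv where "iv = modular_inverse (int b) 2"
  define a3 where "a3 = 3 * iv"
  define a' where "a' = nat (a3 mod int b)"
  have iv: "[2 * iv = 1] (mod int b)"
    using cong_modular_inverse1[of 2 "int b"] coprime6_factors(3)[OF b(2)]
    by (simp add: iv_def coprime_commute)
  have "coprime a3 (int b)"
    using coprime6_factors(4)[OF b(2)] coprime_modular_inverse[of 2 "int b"]
      coprime6_factors(3)[OF b(2)]
    by (simp add: a3_def iv_def coprime_commute)
  then have "coprime b a'"
    using b(1) by (metis a'_def coprime_commute coprime_int_iff coprime_mod_right_iff
        int_nat_eq mod_int_pos_iff of_nat_0_less_iff less_numeral_extra(3))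
  moreover have ord_eq: "ord32 b = ord b a'"
    using b(1) by (simp add: ord32_def ord_int_as_nat a'_def a3_def iv_def)
  ultimately show "ord32 b \<ge> 1"
    by (simp add: Suc_le_eq)
  define f where "f = ord32 b"
  have "[a' ^ f = 1] (mod b)"
    using ord_works[of a' b] by (simp add: f_def ord_eq)
  then have "[(a3 mod int b) ^ f = 1] (mod int b)"
    using b(1) by (metis a'_def cong_int_iff int_nat_eq mod_int_pos_iff of_nat_0_less_iff
        of_nat_1 of_nat_power)
  then have a3: "[a3 ^ f = 1] (mod int b)"
    by (simp add: cong_def power_mod)
  have "[3 ^ f = 3 ^ f * (2 * iv) ^ f] (mod int b)"
    using cong_scalar_left[OF cong_pow[OF cong_sym[OF iv]], of "3 ^ f" f] by simp
  also have "3 ^ f * (2 * iv) ^ f = a3 ^ f * 2 ^ f"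
    by (simp add: a3_def power_mult_distrib)
  also have "[\<dots> = 1 * 2 ^ f] (mod int b)"
    by (rule cong_scalar_right[OF a3])
  finally show "[3 ^ ord32 b = 2 ^ ord32 b] (mod int b)"
    by (simp add: f_def)
qed

(* It is built bit by bit: for even a the first entry is incremented (doubling the offset),
   for odd a a leading T1^{-1}-step is added. *)
lemma two_adic_prefix:
  fixes a :: int
  shows "\<exists>P. P \<noteq> [] \<and> len P \<le> n \<and> 2 ^ n dvd int (offset P) + 3 ^ len P * a"
proof (induction n arbitrary: a)
  case 0
  show ?case by (intro exI[of _ "[0]"]) (simp add: len_def)
next
  case (Suc n)
  show ?case
  proof (cases "even a")
    case True
    then obtain a' where a: "a = 2 * a'" by blast
    obtain P where P: "P \<noteq> []" "len P \<le> n" "2 ^ n dvd int (offset P) + 3 ^ len P * a'"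
      using Suc.IH by blast
    let ?P = "glue [1] P"
    have eq: "int (offset ?P) + 3 ^ len ?P * a = 2 * (int (offset P) + 3 ^ len P * a')"
      using P(1) by (simp add: offset_glue len_glue a)
    have "2 ^ Suc n dvd int (offset ?P) + 3 ^ len ?P * a"
      unfolding eq power_Suc by (rule mult_dvd_mono[OF dvd_refl P(3)])
    then show ?thesis using P by (intro exI[of _ ?P]) (simp add: glue_nonempty len_glue len_Cons)
  next
    case False
    then obtain k where a: "a = 2 * k + 1" by (metis odd_two_times_div_two_succ)
    obtain P where P: "P \<noteq> []" "len P \<le> n" "2 ^ n dvd int (offset P) + 3 ^ len P * (3 * k + 2)"
      using Suc.IH by blast
    let ?P = "glue [0, 0] P"
    have eq: "int (offset ?P) + 3 ^ len ?P * a = 2 * (int (offset P) + 3 ^ len P * (3 * k + 2))"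
      using P(1) by (simp add: offset_glue len_glue len_Cons twos_Cons a algebra_simps)
    have "2 ^ Suc n dvd int (offset ?P) + 3 ^ len ?P * a"
      unfolding eq power_Suc by (rule mult_dvd_mono[OF dvd_refl P(3)])
    then show ?thesis using P by (intro exI[of _ ?P]) (simp add: glue_nonempty len_glue len_Cons)
  qed
qed

(* Blocks realise the residue modulo b.  Each block has length f and twos = f + ph with
   2^ph = 1 mod b, so it acts like multiplication by 2^f = 3^f mod b; its offset is 0 or
   2^(f-1) mod b according to the flag u. *)
definition block :: "nat \<Rightarrow> nat \<Rightarrow> bool \<Rightarrow> nat list" where
  "block ph f u = replicate (f - 1) 0 @ [of_bool u, ph - of_bool u]"

lemma block_nonempty: "block ph f u \<noteq> []"
  by (simp add: block_def)

lemma block_as_glue: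
  "f \<ge> 1 \<Longrightarrow> block ph f u = glue (replicate (f - 1) 0 @ [0]) [of_bool u, ph - of_bool u]"
  by (simp add: block_def glue_def)

lemma len_block: "f \<ge> 1 \<Longrightarrow> len (block ph f u) = f"
  by (simp add: block_def len_def)

lemma twos_block: "f \<ge> 1 \<Longrightarrow> ph \<ge> 1 \<Longrightarrow> twos (block ph f u) = f + ph"
  by (cases u) (simp_all add: block_def twos_def len_def)

lemma offset_block:
  assumes "f \<ge> 1"
  shows "int (offset (block ph f u)) = 3 ^ f - 2 ^ f + of_bool u * 2 ^ (f - 1)"
proof -
  obtain g where f: "f = Suc g" using assms by (cases f) auto
  have "offset (block ph f u) = 2 ^ g * 2 ^ of_bool u + 3 * offset (replicate g 0 @ [0])"
    unfolding block_as_glue[OF assms] using f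
    by (simp add: offset_glue twos_zeros offset_Cons len_Cons)
  then have "int (offset (block ph f u)) = 2 ^ g * 2 ^ of_bool u + 3 * (3 ^ g - 2 ^ g)"
    by (simp add: offset_zeros)
  then show ?thesis using f by (cases u) simp_all
qed

fun blocks :: "nat \<Rightarrow> nat \<Rightarrow> bool list \<Rightarrow> nat list" where
  "blocks ph f [] = [0]"
| "blocks ph f (u # us) = glue (block ph f u) (blocks ph f us)"

lemma blocks_residue:
  fixes b :: nat
  assumes f: "f \<ge> 1" and ph: "ph \<ge> 1"
    and two: "[2 ^ ph = 1] (mod int b)" and three: "[3 ^ f = 2 ^ f] (mod int b)"
  shows "blocks ph f us \<noteq> [] \<and> len (blocks ph f us) = f * length us \<and>
    [3 ^ f * int (offset (blocks ph f us))
       = 3 ^ (f * length us) * 2 ^ (f - 1) * int (count_list us True)] (mod int b)"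
proof (induction us)
  case Nil
  show ?case by simp
next
  case (Cons u us)
  define B where "B = block ph f u"
  define C where "C = blocks ph f us"
  define cnt where "cnt = int (count_list us True)"
  have C: "C \<noteq> []" "len C = f * length us"
    and IH: "[3 ^ f * int (offset C) = 3 ^ (f * length us) * 2 ^ (f - 1) * cnt] (mod int b)"
    using Cons.IH by (simp_all add: C_def cnt_def)
  have "[int (offset B) = 2 ^ f - 2 ^ f + of_bool u * 2 ^ (f - 1)] (mod int b)"
    unfolding B_def offset_block[OF f] by (intro cong_add cong_diff three cong_refl)
  then have B: "[int (offset B) = of_bool u * 2 ^ (f - 1)] (mod int b)"
    by simp
  have "3 ^ f * int (offset (glue B C))
      = 2 ^ ph * 2 ^ f * (3 ^ f * int (offset C)) + 3 ^ (f * length (u # us)) * int (offset B)"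
    using C f ph by (simp add: B_def offset_glue twos_block block_nonempty power_add algebra_simps)
  also have "[\<dots> = 1 * 3 ^ f * (3 ^ (f * length us) * 2 ^ (f - 1) * cnt)
                   + 3 ^ (f * length (u # us)) * (of_bool u * 2 ^ (f - 1))] (mod int b)"
    by (rule cong_add[OF cong_mult[OF cong_mult[OF two cong_sym[OF three]] IH] cong_scalar_left[OF B]])
  also have "1 * 3 ^ f * (3 ^ (f * length us) * 2 ^ (f - 1) * cnt)
                   + 3 ^ (f * length (u # us)) * (of_bool u * 2 ^ (f - 1))
      = 3 ^ (f * length (u # us)) * 2 ^ (f - 1) * int (count_list (u # us) True)"
    by (simp add: cnt_def power_add algebra_simps)
  finally show ?case
    using C f by (simp add: B_def C_def len_glue len_block block_nonempty glue_nonempty)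
qed

(* Choosing how many of b - 1 blocks are flagged, 3^f * offset C hits any residue mod b. *)
lemma block_word_for_residue:
  fixes b :: nat and r :: int
  assumes b: "b > 0" "coprime b 6" and f: "f \<ge> 1" and three: "[3 ^ f = 2 ^ f] (mod int b)"
  shows "\<exists>C. C \<noteq> [] \<and> len C = f * (b - 1) \<and> [3 ^ f * int (offset C) = r] (mod int b)"
proof -
  define ph where "ph = totient b"
  have ph: "ph \<ge> 1" using b by (simp add: ph_def Suc_le_eq)
  have two: "[2 ^ ph = 1] (mod int b)"
    using two_power_totient[OF coprime6_factors(1)[OF b(2)], of 1] by (simp add: ph_def)
  define c0 :: int where "c0 = 3 ^ (f * (b - 1)) * 2 ^ (f - 1)"
  have "coprime c0 (int b)"
    using coprime6_factors[OF b(2)] by (simp add: c0_def coprime_commute)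
  then obtain t where t: "t < b" "[c0 * int t = r] (mod int b)"
    using linear_residue b(1) by blast
  define us where "us = replicate t True @ replicate (b - 1 - t) False"
  have "count_list (replicate k v) w = (if v = w then k else 0)" for k and v w :: bool
    by (induction k) auto
  then have us: "length us = b - 1" "count_list us True = t"
    using t(1) by (simp_all add: us_def)
  show ?thesis
  proof (intro exI conjI)
    note C = blocks_residue[OF f ph two three, of us]
    show "blocks ph f us \<noteq> []" "len (blocks ph f us) = f * (b - 1)"
      using C us by simp_all
    have "[3 ^ f * int (offset (blocks ph f us)) = c0 * int t] (mod int b)"
      using C us by (simp add: c0_def)
    then show "[3 ^ f * int (offset (blocks ph f us)) = r] (mod int b)"
      using t(2) by (rule cong_trans)
  qed
qed

(* The 2-adic prefix, padded at its last entry so that its exponent sum is at least n and a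
   multiple of q (later q = totient b, which makes 2^(twos P) = 1 modulo b). *)
lemma padded_two_adic_prefix:
  fixes a :: int and q :: nat
  assumes "q > 0"
  shows "\<exists>P. P \<noteq> [] \<and> len P \<le> n \<and> n \<le> twos P \<and> q dvd twos P
    \<and> 2 ^ n dvd int (offset P) + 3 ^ len P * a"
proof -
  obtain P where P: "P \<noteq> []" "len P \<le> n" "2 ^ n dvd int (offset P) + 3 ^ len P * a"
    using two_adic_prefix by blast
  obtain L where L: "L \<ge> n" "q dvd twos P + L"
    using pad_to_multiple[OF assms] by blast
  have "glue P [L] \<noteq> []" "len (glue P [L]) = len P" "twos (glue P [L]) = twos P + L"
    "offset (glue P [L]) = offset P"
    using P(1) by (simp_all add: glue_nonempty len_glue twos_glue offset_glue)
  then show ?thesis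
    using P L by (intro exI[of _ "glue P [L]"]) auto
qed

(* Gluing anything after a 2-adically correct prefix with enough factors 2 keeps it correct;
   the condition is stated in the form in which the tail will use it. *)
lemma two_adic_glue:
  fixes a :: int
  assumes P: "P \<noteq> []" "n \<le> twos P" "2 ^ n dvd int (offset P) + 3 ^ len P * a"
    and C: "C \<noteq> []"
  shows "[- (3 ^ f * int (offset (glue P C))) = 3 ^ (len (glue P C) + f) * a] (mod 2 ^ n)"
proof -
  have "2 ^ n dvd (2::int) ^ twos P"
    using P(2) by (simp add: le_imp_power_dvd)
  then have "2 ^ n dvd - (3 ^ f) * (2 ^ twos P * int (offset C)
      + 3 ^ len C * (int (offset P) + 3 ^ len P * a))"
    using P(3) by simp
  also have "- (3 ^ f) * (2 ^ twos P * int (offset C) + 3 ^ len C * (int (offset P) + 3 ^ len P * a))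
      = - (3 ^ f * int (offset (glue P C))) - 3 ^ (len (glue P C) + f) * a"
    using P(1) C by (simp add: offset_glue len_glue power_add algebra_simps)
  finally show ?thesis
    by (simp add: cong_iff_dvd_diff)
qed

lemma prefix_exists:
  fixes b n x :: nat and a :: int
  assumes b: "b > 0" "coprime b 6" and f: "f \<ge> 1" and three: "[3 ^ f = 2 ^ f] (mod int b)"
  shows "\<exists>Q. Q \<noteq> [] \<and> len Q \<le> n + f * (b - 1) \<and> n \<le> twos Q
     \<and> [ - (3 ^ f * int (offset Q)) = 3 ^ (len Q + f) * a] (mod 2 ^ n)
     \<and> [int x - 3 ^ f * int (offset Q) = 3 ^ (len Q + f) * a] (mod int b)"
proof -
  obtain P where P: "P \<noteq> []" "len P \<le> n" "n \<le> twos P" "totient b dvd twos P"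
      "2 ^ n dvd int (offset P) + 3 ^ len P * a"
    using padded_two_adic_prefix[of "totient b"] b(1) by auto
  have two: "[2 ^ twos P = 1] (mod int b)"
    using P(4) two_power_totient[OF coprime6_factors(1)[OF b(2)]] by auto
  define r where "r = int x - 3 ^ (f * b) * int (offset P) - 3 ^ (len P + f * b) * a"
  obtain C where C: "C \<noteq> []" "len C = f * (b - 1)" "[3 ^ f * int (offset C) = r] (mod int b)"
    using block_word_for_residue[OF b f three] by blast
  define Q where "Q = glue P C"
  have fb: "f * (b - 1) + f = f * b" using b(1) by (cases b) (simp_all add: algebra_simps)
  have Q: "Q \<noteq> []" "len Q = len P + f * (b - 1)" "twos Q = twos P + twos C"
    using P C by (simp_all add: Q_def glue_nonempty len_glue twos_glue)
  have "int x - 3 ^ f * int (offset Q)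
      = int x - 2 ^ twos P * (3 ^ f * int (offset C)) - 3 ^ (f * (b - 1) + f) * int (offset P)"
    using P(1) C by (simp add: Q_def offset_glue power_add algebra_simps)
  also have "[\<dots> = int x - 1 * r - 3 ^ (f * b) * int (offset P)] (mod int b)"
    unfolding fb by (intro cong_diff cong_mult two C(3) cong_refl)
  also have "int x - 1 * r - 3 ^ (f * b) * int (offset P) = 3 ^ (len Q + f) * a"
    using Q(2) fb by (simp add: r_def add.assoc)
  finally show ?thesis
    using Q P(2,3) two_adic_glue[OF P(1,3,5) C(1), of f] unfolding Q_def by auto
qed

lemma tail_numer:
  fixes Q :: "nat list" and f c e x :: nat
  assumes Q: "Q \<noteq> []" and f: "f \<ge> 1" and c: "c \<ge> twos Q"
  defines "R \<equiv> glue [c - twos Q] (replicate f 0 @ [e])"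
  shows "len (glue Q R) = len Q + f"
    "numer (glue Q R) x = 2 ^ (c + f + e) * int x - 2 ^ c * (3 ^ f - 2 ^ f) - 3 ^ f * int (offset Q)"
proof -
  have R: "R \<noteq> []" "len R = f" "twos R = c - twos Q + f + e"
    "int (offset R) = 2 ^ (c - twos Q) * (3 ^ f - 2 ^ f)"
    by (simp_all add: R_def glue_nonempty len_glue twos_glue offset_glue len_zeros twos_zeros
        offset_zeros)
  then show "len (glue Q R) = len Q + f"
    using Q by (simp add: len_glue)
  have "twos Q + (c - twos Q) = c" using c by simp
  then show "numer (glue Q R) x = 2 ^ (c + f + e) * int x - 2 ^ c * (3 ^ f - 2 ^ f) - 3 ^ f * int (offset Q)"
    using Q R by (simp add: numer_def twos_glue offset_glue power_add[symmetric] add.assoc)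
qed

lemma tail_numer_pos:
  fixes c f e x q :: nat
  assumes x: "x > 0" and e: "e \<ge> 3 ^ f + 3 ^ f * q"
  shows "2 ^ (c + f + e) * int x - 2 ^ c * (3 ^ f - 2 ^ f) - 3 ^ f * int q > 0"
proof -
  have "(2::int) ^ c * (3 ^ f - 2 ^ f) \<le> 2 ^ c * 3 ^ f"
    by simp
  moreover have "3 ^ f * int q \<le> 2 ^ c * (3 ^ f * int q)"
    using mult_right_mono[of 1 "(2::int) ^ c" "3 ^ f * int q"] by simp
  ultimately have "2 ^ c * (3 ^ f - 2 ^ f) + 3 ^ f * int q \<le> 2 ^ c * 3 ^ f + 2 ^ c * (3 ^ f * int q)"
    by (rule add_mono)
  also have "\<dots> = 2 ^ c * int (3 ^ f + 3 ^ f * q)"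
    by (simp add: algebra_simps)
  also have "\<dots> < 2 ^ c * 2 ^ e"
  proof -
    have "3 ^ f + 3 ^ f * q < 2 ^ e" using e less_exp[of e] by linarith
    then have "int (3 ^ f + 3 ^ f * q) < 2 ^ e" by (metis of_nat_less_iff of_nat_numeral of_nat_power)
    then show ?thesis by simp
  qed
  also have "\<dots> \<le> 2 ^ (c + f + e)"
    by (simp add: power_add)
  also have "\<dots> \<le> 2 ^ (c + f + e) * int x"
    using x by simp
  finally show ?thesis by simp
qed

lemma two_power_period:
  fixes N K T :: nat
  assumes "coprime N 2" and "totient (N * 3 ^ K) dvd T"
  shows "[2 ^ T = 1] (mod int N)" "[(2::int) ^ T = 1] (mod 3 ^ K)"
proof -
  obtain j where "T = totient (N * 3 ^ K) * j" using assms(2) by blast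
  moreover have "coprime (N * 3 ^ K) 2" using assms(1) by simp
  ultimately have "[2 ^ T = 1] (mod int N * 3 ^ K)"
    using two_power_totient[of "N * 3 ^ K" j] by simp
  then show "[2 ^ T = 1] (mod int N)" "[(2::int) ^ T = 1] (mod 3 ^ K)"
    by (auto intro: cong_modulus_mult simp: mult.commute[of "int N"])
qed

(* The tail fixes the residue modulo 3^K (choice of c via the primitive root 2), makes
   2^(twos s) = 1 modulo N and 3^K and the numerator positive (choice of e), and leaves the
   residues modulo 2^n and N prescribed by the prefix Q untouched. *)
lemma tail_exists:
  fixes Q :: "nat list" and N K n x f :: nat and t :: int
  assumes Q: "Q \<noteq> []" "n \<le> twos Q" and f: "f \<ge> 1"
    and N: "coprime N 2" "[3 ^ f = 2 ^ f] (mod int N)"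
    and x: "x > 0" "\<not> 3 dvd int x - t"
  shows "\<exists>R. len (glue Q R) = len Q + f \<and> numer (glue Q R) x > 0
    \<and> [numer (glue Q R) x = - (3 ^ f * int (offset Q))] (mod 2 ^ n)
    \<and> [numer (glue Q R) x = int x - 3 ^ f * int (offset Q)] (mod int N)
    \<and> [numer (glue Q R) x = t] (mod 3 ^ K)"
proof -
  define q where "q = int (offset Q)"
  define w :: int where "w = 3 ^ f - 2 ^ f"
  have "\<not> 3 dvd (int x - t) + 3 ^ f * (- q)"
    using x(2) f by (rule not_dvd3_add_pow3)
  then have "\<not> 3 dvd int x - 3 ^ f * q - t"
    by (simp add: algebra_simps)
  then obtain c where c: "c \<ge> twos Q" "[w * 2 ^ c = int x - 3 ^ f * q - t] (mod 3 ^ K)"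
    using two_generates_mod_pow3 not_dvd3_pow3_minus_pow2[OF f] unfolding w_def by blast
  have "N > 0" using N(1) by (cases N) auto
  then obtain e where e: "e \<ge> 3 ^ f + 3 ^ f * offset Q" "totient (N * 3 ^ K) dvd c + f + e"
    using pad_to_multiple[of "totient (N * 3 ^ K)"] by auto
  define R where "R = glue [c - twos Q] (replicate f 0 @ [e])"
  note tail = tail_numer(1)[OF Q(1) f c(1), of e, folded R_def]
    tail_numer(2)[OF Q(1) f c(1), of e x, folded R_def w_def q_def]
  note one = two_power_period[OF N(1) e(2)]
  have "[numer (glue Q R) x = 1 * int x - 2 ^ c * w - 3 ^ f * q] (mod 3 ^ K)"
    unfolding tail(2) by (intro cong_diff cong_mult one(2) cong_refl)
  also have "[1 * int x - 2 ^ c * w - 3 ^ f * q = t] (mod 3 ^ K)"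
  proof -
    have "3 ^ K dvd - (w * 2 ^ c - (int x - 3 ^ f * q - t))"
      using c(2) by (simp only: cong_iff_dvd_diff dvd_minus_iff)
    also have "- (w * 2 ^ c - (int x - 3 ^ f * q - t)) = 1 * int x - 2 ^ c * w - 3 ^ f * q - t"
      by (simp add: algebra_simps)
    finally show ?thesis by (simp add: cong_iff_dvd_diff)
  qed
  finally have mod3: "[numer (glue Q R) x = t] (mod 3 ^ K)" .
  have "[w = 0] (mod int N)"
    using N(2) by (simp add: w_def cong_iff_dvd_diff)
  then have "[numer (glue Q R) x = 1 * int x - 2 ^ c * 0 - 3 ^ f * q] (mod int N)"
    unfolding tail(2) by (intro cong_diff cong_mult one(1) cong_refl)
  then have modN: "[numer (glue Q R) x = int x - 3 ^ f * q] (mod int N)"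
    by simp
  have "(2::int) ^ n dvd 2 ^ c" using Q(2) c(1) by (simp add: le_imp_power_dvd)
  then have "(2::int) ^ n dvd 2 ^ c * (2 ^ (f + e) * int x - w)" by (rule dvd_mult2)
  also have "2 ^ c * (2 ^ (f + e) * int x - w) = numer (glue Q R) x - - (3 ^ f * q)"
    by (simp add: tail(2) power_add algebra_simps)
  finally have mod2: "[numer (glue Q R) x = - (3 ^ f * q)] (mod 2 ^ n)"
    by (simp add: cong_iff_dvd_diff)
  have "numer (glue Q R) x > 0"
    unfolding tail(2) w_def q_def using tail_numer_pos[OF x(1) e(1)] .
  then show ?thesis
    using tail(1) mod2 modN mod3 by (auto simp: q_def)
qed

(* The prefix settles the conditions modulo 2^n
   and b, the tail the condition modulo 3^(l(s)+m); they combine by the Chinese remainder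
   theorem. *)
lemma numerator_construction:
  fixes d n m b a x f :: nat
  assumes d: "d = 2 ^ n * 3 ^ m * b" and b: "b > 0" "coprime b 6"
    and f: "f \<ge> 1" "[3 ^ f = 2 ^ f] (mod int b)" and x: "x > 0" "\<not> 3 dvd x"
  shows "\<exists>s. s \<noteq> [] \<and> len s \<le> n + f * (b - 1) + f \<and> numer s x > 0
    \<and> [numer s x = 3 ^ len s * int a] (mod 3 ^ len s * int d)"
proof -
  obtain Q where Q: "Q \<noteq> []" "len Q \<le> n + f * (b - 1)" "n \<le> twos Q"
      "[- (3 ^ f * int (offset Q)) = 3 ^ (len Q + f) * int a] (mod 2 ^ n)"
      "[int x - 3 ^ f * int (offset Q) = 3 ^ (len Q + f) * int a] (mod int b)"
    using prefix_exists[OF b f, of n "int a" x] by blast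
  define k where "k = len Q + f"
  have "\<not> 3 dvd int x + 3 ^ k * (- int a)"
    using x(2) f(1) by (intro not_dvd3_add_pow3) (auto simp: k_def int_dvd_int_iff[of 3, simplified])
  then have x3: "\<not> 3 dvd int x - 3 ^ k * int a"
    by simp
  obtain R where R: "len (glue Q R) = k" "numer (glue Q R) x > 0"
      "[numer (glue Q R) x = - (3 ^ f * int (offset Q))] (mod 2 ^ n)"
      "[numer (glue Q R) x = int x - 3 ^ f * int (offset Q)] (mod int b)"
      "[numer (glue Q R) x = 3 ^ k * int a] (mod 3 ^ (k + m))"
    using tail_exists[OF Q(1,3) f(1) coprime6_factors(1)[OF b(2)] f(2) x(1) x3, of "k + m"]
    by (auto simp: k_def)
  have "[numer (glue Q R) x = 3 ^ k * int a] (mod 2 ^ n * int b * 3 ^ (k + m))"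
    using R(3-5) Q(4,5) unfolding k_def[symmetric] by (intro cong_2_b_3 b(2)) (auto intro: cong_trans)
  moreover have "2 ^ n * int b * 3 ^ (k + m) = 3 ^ k * int d"
    by (simp add: d power_add)
  ultimately show ?thesis
    using Q(2) R(1,2) by (intro exI[of _ "glue Q R"]) (simp add: glue_nonempty k_def)
qed

lemma length_bound:
  fixes b f l n :: nat
  assumes "b > 0" "b = 1 \<Longrightarrow> f = 1" "l \<le> n + f * (b - 1) + f"
  shows "l \<le> 2 * (b - 1) * f + n + 1"
proof (cases "b = 1")
  case True
  then show ?thesis using assms by simp
next
  case False
  then have "b \<le> 2 * (b - 1)" using assms(1) by linarith
  then have "f * b \<le> f * (2 * (b - 1))" by (rule mult_le_mono2)
  moreover have "f * (b - 1) + f = f * b" using assms(1) by (cases b) simp_all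
  ultimately show ?thesis using assms(3) by (simp add: algebra_simps)
qed

theorem mainTheorem4:
  fixes d n m b a x :: nat
  assumes "d > 1"
    and "d = 2 ^ n * 3 ^ m * b"
    and "coprime b 6"
    and "a < d"
    and "x > 0"
    and "\<not> 3 dvd x"
  shows "\<exists>s \<in> E x. \<exists>z::nat. vs s (of_nat x) = of_nat z \<and> [z = a] (mod d)
           \<and> len s \<le> 2 * (b - 1) * ord32 b + n + 1"
proof -
  have b: "b > 0" using assms(1,2) by (cases b) auto
  obtain s where s: "s \<noteq> []" "len s \<le> n + ord32 b * (b - 1) + ord32 b" "numer s x > 0"
      "[numer s x = 3 ^ len s * int a] (mod 3 ^ len s * int d)"
    using numerator_construction[OF assms(2) b assms(3) ord32_props[OF b assms(3)] assms(5,6)]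
    by blast
  have "s \<in> E x \<and> (\<exists>z::nat. vs s (of_nat x) = of_nat z \<and> [z = a] (mod d))"
    using s(1,3,4) by (rule admissible_of_congruence)
  moreover have "len s \<le> 2 * (b - 1) * ord32 b + n + 1"
    using length_bound[OF b _ s(2)] by (simp add: ord32_def)
  ultimately show ?thesis by blast
qed

end
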